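(* Let $\mathcal{A}$ be a finite or countable alphabet, $\mathcal{M}$ a countable set of probability measures on $\mathcal{A}^\infty$, $w:\mathcal{M}\to(0,1]$ a prior with $\sum_\nu w_\nu=1$, and $\xi$ the Bayes mixture. Let $\nu\in\mathcal{M}$ and let $I$ be a stopping interval. Then $$\mathbb{E}_\nu\sum_{t\in I}d_t(\nu,\xi)\le\sum_{x\in\mathcal{A}(I)}\nu(x)\left(\ln\frac1{w_\nu}+\ln\frac{\xi(x)}{\nu(x)}\right).$$
   Context: $\mathcal{A}^\infty$ carries the filtration $\mathcal{F}_{<t}:=\sigma(\{\Gamma_x:x\in\mathcal{A}^{t-1}\})$, $\Gamma_x=\{x\omega:\omega\in\mathcal{A}^\infty\}$; for a measure $\rho$, $\rho(x):=\rho(\Gamma_x)$, $\rho(y|x):=\rho(xy)/\rho(x)$. Bayes mixture $\xi(A):=\sum_\nu w_\nu\nu(A)$. Natural logs. $d_t(\nu,\xi)(\omega):=\sum_a\nu(a|\omega_{<t})\ln\frac{\nu(a|\omega_{<t})}{\xi(a|\omega_{<t})}$ with $\omega_{<t}=\omega_1\cdots\omega_{t-1}$. A stopping time is $t:\mathcal{A}^\infty\to\mathbb{N}\cup\{\infty\}$ with $t^{-1}(n)$ $\mathcal{F}_{<n}$-measurable for all $n$; for it, $\mathcal{A}(t):=\{x\in\mathcal{A}^*: t(x\omega)=\ell(x)+1\ \forall\omega\}$, $\ell(x)$ the length of $x$. If $t\le t'$ are stopping times, $I(\omega):=[t(\omega),t'(\omega))$ is a stopping interval and $\mathcal{A}(I):=\mathcal{A}(t)$.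 Terms with $\nu(x)=0$ in the right-hand sum are taken to be $0$. *)

theory Defs
  imports "HOL-Probability.Probability"
begin

abbreviation seqS :: "'a::countable stream measure" where
  "seqS \<equiv> stream_space (count_space UNIV)"

definition cyl :: "'a list \<Rightarrow> 'a stream set" where
  "cyl x = {\<omega>. stake (length x) \<omega> = x}"

definition mcyl :: "'a stream measure \<Rightarrow> 'a list \<Rightarrow> real" where
  "mcyl \<rho> x = measure \<rho> (cyl x)"

definition xi :: "'a stream measure set \<Rightarrow> ('a stream measure \<Rightarrow> real) \<Rightarrow> 'a stream set \<Rightarrow> real" where
  "xi Ms w A = (\<Sum>\<^sub>\<infinity>\<nu>\<in>Ms. w \<nu> * measure \<nu> A)"

definition xicyl :: "'a stream measure set \<Rightarrow> ('a stream measure \<Rightarrow> real) \<Rightarrow> 'a list \<Rightarrow> real" where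
  "xicyl Ms w x = xi Ms w (cyl x)"

definition cond :: "('a list \<Rightarrow> real) \<Rightarrow> 'a list \<Rightarrow> 'a list \<Rightarrow> real" where
  "cond \<rho> y x = \<rho> (x @ y) / \<rho> x"

text \<open>d_t(nu,xi)(omega), with omega_{<t} = stake (t-1) omega.\<close>
definition dKL :: "'a::countable stream measure set \<Rightarrow> ('a stream measure \<Rightarrow> real) \<Rightarrow> 'a stream measure
    \<Rightarrow> nat \<Rightarrow> 'a stream \<Rightarrow> real" where
  "dKL Ms w \<nu> t \<omega> =
     (\<Sum>\<^sub>\<infinity>a\<in>UNIV. cond (mcyl \<nu>) [a] (stake (t - 1) \<omega>) *
        ln (cond (mcyl \<nu>) [a] (stake (t - 1) \<omega>) / cond (xicyl Ms w) [a] (stake (t - 1) \<omega>)))"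

definition Flt :: "nat \<Rightarrow> 'a stream set set" where
  "Flt n = sigma_sets UNIV {cyl x | x. length x = n - 1}"

definition stopping_time :: "('a stream \<Rightarrow> enat) \<Rightarrow> bool" where
  "stopping_time t \<longleftrightarrow> (\<forall>\<omega>. 1 \<le> t \<omega>) \<and>
     (\<forall>n::nat. 1 \<le> n \<longrightarrow> t -` {enat n} \<in> Flt n)"

definition Aset :: "('a stream \<Rightarrow> enat) \<Rightarrow> 'a list set" where
  "Aset t = {x. \<forall>\<omega>. t (x @- \<omega>) = enat (length x + 1)}"

end

theory Submission
  imports Defs
begin

text \<open>Write \<open>G(x) = \<nu>(x) (ln (1 / w\<^sub>\<nu>) + ln (\<xi>(x) / \<nu>(x)))\<close>. Dominance
  \<open>w\<^sub>\<nu> \<nu> \<le> \<xi>\<close> makes \<open>G\<close> nonnegative, and the chain rule for relative entropy gives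
  \<open>G(x) = \<nu>(x) d\<^bsub>|x|+1\<^esub>(\<nu>, \<xi>) + \<Sum>\<^sub>a G(xa)\<close>. Unrolling this identity, the
  \<open>\<nu>\<close>-expected sum of all \<open>d\<^sub>s\<close> with \<open>s > |x|\<close> over the cylinder of \<open>x\<close> is at most
  \<open>G(x)\<close>. Each \<open>\<omega>\<close> with \<open>t(\<omega>) < \<infinity>\<close> lies in the cylinder of its prefix of length
  \<open>t(\<omega>) - 1\<close>, which belongs to \<open>\<A>(t)\<close>; bounding the sum over \<open>[t, t')\<close> by the sum over
  all \<open>s \<ge> t\<close> and summing over \<open>\<A>(t)\<close> gives the claim.\<close>

lemma infsum_eq_nn_integral_count_space:
  fixes f :: "'i \<Rightarrow> ennreal"
  assumes "countable I"
  shows "infsum f I = (\<integral>\<^sup>+ i. f i \<partial>count_space I)"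
proof (cases "finite I")
  case True
  then show ?thesis by (simp add: nn_integral_count_space_finite)
next
  case False
  note enum = bij_betw_from_nat_into[OF assms False]
  have "(\<integral>\<^sup>+ i. f i \<partial>count_space I) = (\<Sum>n. f (from_nat_into I n))"
    by (simp add: nn_integral_bij_count_space[symmetric, OF enum] nn_integral_count_space_nat)
  also have "\<dots> = infsum (\<lambda>n. f (from_nat_into I n)) UNIV"
    by (rule sums_unique[symmetric], rule has_sum_imp_sums)
       (simp add: nonneg_summable_on_complete)
  also have "\<dots> = infsum f I" by (rule infsum_reindex_bij_betw[OF enum])
  finally show ?thesis ..
qed

lemma ennreal_infsum:
  fixes f :: "'i \<Rightarrow> real"
  assumes "f summable_on A" "\<And>x. x \<in> A \<Longrightarrow> 0 \<le> f x"
  shows "ennreal (infsum f A) = (\<Sum>\<^sub>\<infinity>x\<in>A. ennreal (f x))"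
proof -
  have "ennreal (infsum f A) = (SUP F\<in>{F. finite F \<and> F \<subseteq> A}. ennreal (sum f F))"
    by (rule infsum_nonneg_is_SUPREMUM_ennreal[OF assms])
  also have "\<dots> = (SUP F\<in>{F. finite F \<and> F \<subseteq> A}. (\<Sum>x\<in>F. ennreal (f x)))"
    using assms(2) by (intro SUP_cong refl) (auto intro!: sum_ennreal[symmetric])
  also have "\<dots> = (\<Sum>\<^sub>\<infinity>x\<in>A. ennreal (f x))"
    by (rule nonneg_infsum_complete[symmetric]) simp
  finally show ?thesis .
qed

lemma has_sum_iff_ennreal_infsum:
  fixes f :: "'i \<Rightarrow> real"
  assumes nonneg: "\<And>x. x \<in> A \<Longrightarrow> 0 \<le> f x" and "0 \<le> c"
  shows "(f has_sum c) A \<longleftrightarrow> (\<Sum>\<^sub>\<infinity>x\<in>A. ennreal (f x)) = ennreal c"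
proof
  assume h: "(f has_sum c) A"
  then have "f summable_on A" by (auto simp: summable_on_def)
  from ennreal_infsum[OF this nonneg] show "(\<Sum>\<^sub>\<infinity>x\<in>A. ennreal (f x)) = ennreal c"
    by (simp add: infsumI[OF h])
next
  assume sum_eq: "(\<Sum>\<^sub>\<infinity>x\<in>A. ennreal (f x)) = ennreal c"
  have "sum f F \<le> c" if "F \<subseteq> A" "finite F" for F
  proof -
    have "ennreal (sum f F) = (\<Sum>\<^sub>\<infinity>x\<in>F. ennreal (f x))"
      using that nonneg by (auto intro!: sum_ennreal[symmetric])
    also have "\<dots> \<le> ennreal c"
      unfolding sum_eq[symmetric] using that
      by (intro infsum_mono_neutral) (auto simp: nonneg_summable_on_complete)
    finally show ?thesis using \<open>0 \<le> c\<close> by simp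
  qed
  then have summable: "f summable_on A"
    by (intro nonneg_bdd_above_summable_on bdd_aboveI) (auto simp: nonneg)
  then have "ennreal (infsum f A) = ennreal c"
    using ennreal_infsum[OF summable] nonneg sum_eq by simp
  then have "infsum f A = c"
    using \<open>0 \<le> c\<close> infsum_nonneg[of A f] nonneg by simp
  with has_sum_infsum[OF summable] show "(f has_sum c) A" by simp
qed

lemma has_sum_iff_nn_integral_count_space:
  fixes f :: "'i \<Rightarrow> real"
  assumes "countable A" "\<And>x. x \<in> A \<Longrightarrow> 0 \<le> f x" "0 \<le> c"
  shows "(f has_sum c) A \<longleftrightarrow> (\<integral>\<^sup>+ x. ennreal (f x) \<partial>count_space A) = ennreal c"
  by (simp add: has_sum_iff_ennreal_infsum[OF assms(2,3)]
      infsum_eq_nn_integral_count_space[OF assms(1)])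

lemma has_sum_diff:
  fixes f g :: "'i \<Rightarrow> 'a::topological_ab_group_add"
  assumes "(f has_sum a) A" "(g has_sum b) A"
  shows "((\<lambda>x. f x - g x) has_sum (a - b)) A"
proof -
  have "((\<lambda>x. - g x) has_sum - b) A" using assms(2) by (simp add: has_sum_uminus)
  from has_sum_add[OF assms(1) this] show ?thesis by simp
qed

lemma diff_le_mult_ln_div:
  fixes u v :: real
  assumes "0 < u" "0 < v"
  shows "u - v \<le> u * ln (u / v)"
proof -
  have "ln (v / u) \<le> v / u - 1" using assms by (intro ln_le_minus_one) simp
  then have "u * (1 - v / u) \<le> u * ln (u / v)"
    using assms by (intro mult_left_mono) (auto simp: ln_div)
  then show ?thesis using assms by (simp add: algebra_simps)
qed

definition regret_bound :: "real \<Rightarrow> real \<Rightarrow> real \<Rightarrow> real" where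
  "regret_bound W u v = (if u = 0 then 0 else u * (ln (1 / W) + ln (v / u)))"

lemma regret_bound_eq:
  assumes "0 < W" "0 < u" "W * u \<le> v"
  shows "regret_bound W u v = u * ln (v / (W * u))"
proof -
  have "0 < v" using assms by (metis mult_pos_pos order_less_le_trans)
  then show ?thesis using assms by (simp add: regret_bound_def ln_div ln_mult)
qed

lemma regret_bound_nonneg:
  assumes "0 < W" "0 \<le> u" "W * u \<le> v"
  shows "0 \<le> regret_bound W u v"
proof (cases "u = 0")
  case False
  then have "0 < u" using assms by simp
  moreover have "1 \<le> v / (W * u)" using assms \<open>0 < u\<close> by simp
  ultimately show ?thesis using regret_bound_eq[OF assms(1) _ assms(3)] by simp
qed (simp add: regret_bound_def)

text \<open>Gibbs' inequality bounds each child's regret by the summable family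
  \<open>n a * K - n a + n0 * X a / X0\<close>, where \<open>K = ln (X0 / (W * n0))\<close>.\<close>

lemma regret_bound_chain_rule:
  fixes n X :: "'i \<Rightarrow> real"
  assumes W: "0 < W" and n0: "0 < n0" and dom0: "W * n0 \<le> X0"
    and n_nonneg: "\<And>a. a \<in> A \<Longrightarrow> 0 \<le> n a" and dom: "\<And>a. a \<in> A \<Longrightarrow> W * n a \<le> X a"
    and hn: "(n has_sum n0) A" and hX: "(X has_sum X0) A"
  defines "D \<equiv> \<Sum>\<^sub>\<infinity>a\<in>A. n a / n0 * ln ((n a / n0) / (X a / X0))"
  shows "0 \<le> D" and "((\<lambda>a. regret_bound W (n a) (X a)) has_sum (regret_bound W n0 X0 - n0 * D)) A"
proof -
  have X0: "0 < X0" using W n0 dom0 by (metis mult_pos_pos order_less_le_trans)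
  define K where "K = ln (X0 / (W * n0))"
  define G where "G a = regret_bound W (n a) (X a)" for a
  define t where "t a = n a / n0 * ln ((n a / n0) / (X a / X0))" for a
  have pos_X: "0 < X a" if "a \<in> A" "0 < n a" for a
    using W that dom by (metis mult_pos_pos order_less_le_trans)
  have G_eq: "G a = n a * K - n0 * t a" if "a \<in> A" for a
  proof (cases "n a = 0")
    case False
    then have "0 < n a" using n_nonneg[OF that] by simp
    with pos_X[OF that] show ?thesis
      using n0 X0 W by (simp add: G_def t_def K_def regret_bound_def ln_div ln_mult algebra_simps)
  qed (simp add: G_def t_def regret_bound_def)
  have gibbs: "n a / n0 - X a / X0 \<le> t a" if "a \<in> A" for a
  proof (cases "n a = 0")
    case True
    then show ?thesis using dom[OF that] X0 by (simp add: t_def)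
  next
    case False
    then have "0 < n a" using n_nonneg[OF that] by simp
    with pos_X[OF that] show ?thesis
      unfolding t_def using n0 X0 by (intro diff_le_mult_ln_div) auto
  qed
  have h_ratio_n: "((\<lambda>a. n a / n0) has_sum 1) A"
    using has_sum_cmult_left[OF hn, of "1 / n0"] n0 by simp
  have h_ratio_X: "((\<lambda>a. X a / X0) has_sum 1) A"
    using has_sum_cmult_left[OF hX, of "1 / X0"] X0 by simp
  have G_le: "G a \<le> n a * K - n a + n0 * (X a / X0)" if "a \<in> A" for a
  proof -
    have "n0 * (n a / n0 - X a / X0) \<le> n0 * t a"
      using gibbs[OF that] n0 by (intro mult_left_mono) auto
    moreover have "n0 * (n a / n0 - X a / X0) = n a - n0 * (X a / X0)"
      using n0 by (simp add: field_simps)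
    ultimately show ?thesis using G_eq[OF that] by linarith
  qed
  have "G summable_on A"
  proof (rule summable_on_comparison_test)
    show "(\<lambda>a. n a * K - n a + n0 * (X a / X0)) summable_on A"
      using has_sum_add[OF has_sum_diff[OF has_sum_cmult_left[OF hn, of K] hn]
          has_sum_cmult_right[OF h_ratio_X, of n0]]
      by (auto simp: summable_on_def)
    show "0 \<le> G a" if "a \<in> A" for a
      unfolding G_def using W n_nonneg[OF that] dom[OF that] by (rule regret_bound_nonneg)
  qed (rule G_le)
  then obtain SG where hG: "(G has_sum SG) A" by (auto simp: summable_on_def)
  have "((\<lambda>a. (n a * K - G a) / n0) has_sum ((n0 * K - SG) / n0)) A"
    using has_sum_cmult_left[OF has_sum_diff[OF has_sum_cmult_left[OF hn, of K] hG], of "1 / n0"]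
    by simp
  then have ht: "(t has_sum ((n0 * K - SG) / n0)) A"
    by (rule has_sum_cong[THEN iffD1, rotated]) (use G_eq n0 in simp)
  then have D_eq: "D = (n0 * K - SG) / n0"
    unfolding D_def t_def[symmetric] by (rule infsumI)
  have "1 - 1 \<le> D"
    unfolding D_eq by (rule has_sum_mono[OF has_sum_diff[OF h_ratio_n h_ratio_X] ht gibbs])
  then show "0 \<le> D" by simp
  have "regret_bound W n0 X0 = n0 * K"
    unfolding K_def by (rule regret_bound_eq[OF W n0 dom0])
  then have "SG = regret_bound W n0 X0 - n0 * D" using n0 by (simp add: D_eq)
  with hG show "((\<lambda>a. regret_bound W (n a) (X a)) has_sum (regret_bound W n0 X0 - n0 * D)) A"
    unfolding G_def[abs_def] by simp
qed

lemma cyl_in_sets: "cyl x \<in> sets seqS"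
proof -
  have "cyl x = stake (length x) -` {x} \<inter> space seqS"
    by (auto simp: cyl_def space_stream_space)
  also have "\<dots> \<in> sets seqS"
    by (rule measurable_sets[OF measurable_stake]) simp
  finally show ?thesis .
qed

lemma mem_cyl_snoc: "\<omega> \<in> cyl (p @ [a]) \<longleftrightarrow> \<omega> \<in> cyl p \<and> \<omega> !! length p = a"
proof -
  have "stake (length (p @ [a])) \<omega> = stake (length p) \<omega> @ [\<omega> !! length p]"
    by (simp only: length_append_singleton stake_Suc)
  then show ?thesis by (auto simp: cyl_def)
qed

lemma mcyl_has_sum_snoc:
  assumes "finite_measure \<rho>" "sets \<rho> = sets seqS"
  shows "((\<lambda>a. mcyl \<rho> (p @ [a])) has_sum mcyl \<rho> p) UNIV"
proof -
  interpret finite_measure \<rho> by fact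
  have "emeasure \<rho> (cyl p) = emeasure \<rho> (\<Union>a. cyl (p @ [a]))"
    by (rule arg_cong[where f = "emeasure \<rho>"]) (auto simp: mem_cyl_snoc)
  also have "\<dots> = (\<integral>\<^sup>+ a. emeasure \<rho> (cyl (p @ [a])) \<partial>count_space UNIV)"
    using cyl_in_sets assms(2)
    by (intro emeasure_UN_countable) (auto simp: disjoint_family_on_def mem_cyl_snoc)
  finally show ?thesis
    by (subst has_sum_iff_nn_integral_count_space) (auto simp: mcyl_def emeasure_eq_measure)
qed

lemma mcyl_snoc_le:
  assumes "finite_measure \<rho>" "sets \<rho> = sets seqS"
  shows "mcyl \<rho> (p @ [a]) \<le> mcyl \<rho> p"
  unfolding mcyl_def using assms cyl_in_sets
  by (intro finite_measure.finite_measure_mono) (auto simp: mem_cyl_snoc)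

locale bayes_mixture =
  fixes Ms :: "'a::countable stream measure set"
    and w :: "'a stream measure \<Rightarrow> real"
    and \<nu> :: "'a stream measure"
  assumes countable_Ms: "countable Ms"
    and prob_space_Ms: "\<And>\<rho>. \<rho> \<in> Ms \<Longrightarrow> prob_space \<rho>"
    and sets_Ms: "\<And>\<rho>. \<rho> \<in> Ms \<Longrightarrow> sets \<rho> = sets seqS"
    and weight_pos: "\<And>\<rho>. \<rho> \<in> Ms \<Longrightarrow> 0 < w \<rho>"
    and weights_sum: "(w has_sum 1) Ms"
    and nu_in_Ms: "\<nu> \<in> Ms"
begin

lemma finite_measure_Ms: "\<rho> \<in> Ms \<Longrightarrow> finite_measure \<rho>"
  using prob_space_Ms prob_space_def by blast

lemma weighted_mcyl_nonneg: "\<rho> \<in> Ms \<Longrightarrow> 0 \<le> w \<rho> * mcyl \<rho> x"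
  using weight_pos by (simp add: mcyl_def less_imp_le)

lemma weighted_mcyl_summable: "(\<lambda>\<rho>. w \<rho> * mcyl \<rho> x) summable_on Ms"
proof (rule summable_on_comparison_test)
  show "w summable_on Ms" using weights_sum by (auto simp: summable_on_def)
  show "w \<rho> * mcyl \<rho> x \<le> w \<rho>" if "\<rho> \<in> Ms" for \<rho>
    using prob_space.prob_le_1[OF prob_space_Ms[OF that]] weight_pos[OF that]
    by (simp add: mcyl_def mult_left_le)
qed (rule weighted_mcyl_nonneg)

lemma xicyl_eq: "xicyl Ms w x = (\<Sum>\<^sub>\<infinity>\<rho>\<in>Ms. w \<rho> * mcyl \<rho> x)"
  by (simp add: xicyl_def xi_def mcyl_def)

lemma weighted_mcyl_le_xicyl: "w \<nu> * mcyl \<nu> x \<le> xicyl Ms w x"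
proof -
  have "(\<Sum>\<^sub>\<infinity>\<rho>\<in>{\<nu>}. w \<rho> * mcyl \<rho> x) \<le> (\<Sum>\<^sub>\<infinity>\<rho>\<in>Ms. w \<rho> * mcyl \<rho> x)"
    using nu_in_Ms weighted_mcyl_summable weighted_mcyl_nonneg
    by (intro infsum_mono_neutral) auto
  then show ?thesis by (simp add: xicyl_eq)
qed

lemma ennreal_xicyl: "ennreal (xicyl Ms w x) = (\<integral>\<^sup>+ \<rho>. ennreal (w \<rho> * mcyl \<rho> x) \<partial>count_space Ms)"
proof -
  have "((\<lambda>\<rho>. w \<rho> * mcyl \<rho> x) has_sum xicyl Ms w x) Ms"
    unfolding xicyl_eq using weighted_mcyl_summable by (rule has_sum_infsum)
  moreover have "0 \<le> xicyl Ms w x"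
    unfolding xicyl_eq using weighted_mcyl_nonneg by (rule infsum_nonneg)
  ultimately show ?thesis
    using weighted_mcyl_nonneg by (subst (asm) has_sum_iff_nn_integral_count_space[OF countable_Ms]) auto
qed

lemma xicyl_has_sum_snoc: "((\<lambda>a. xicyl Ms w (p @ [a])) has_sum xicyl Ms w p) UNIV"
proof -
  have children: "(\<integral>\<^sup>+ a. ennreal (w \<rho> * mcyl \<rho> (p @ [a])) \<partial>count_space UNIV)
      = ennreal (w \<rho> * mcyl \<rho> p)" if "\<rho> \<in> Ms" for \<rho>
  proof -
    have "((\<lambda>a. w \<rho> * mcyl \<rho> (p @ [a])) has_sum w \<rho> * mcyl \<rho> p) UNIV"
      by (rule has_sum_cmult_right, rule mcyl_has_sum_snoc[OF finite_measure_Ms sets_Ms]) (use that in auto)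
    then show ?thesis
      using weighted_mcyl_nonneg[OF that] by (subst (asm) has_sum_iff_nn_integral_count_space) auto
  qed
  have "(\<integral>\<^sup>+ a. ennreal (xicyl Ms w (p @ [a])) \<partial>count_space UNIV)
      = (\<integral>\<^sup>+ \<rho>. (\<integral>\<^sup>+ a. ennreal (w \<rho> * mcyl \<rho> (p @ [a])) \<partial>count_space UNIV) \<partial>count_space Ms)"
    unfolding ennreal_xicyl
    by (rule nn_integral_count_space_nn_integral) (auto simp: countable_Ms)
  also have "\<dots> = ennreal (xicyl Ms w p)"
    unfolding ennreal_xicyl by (rule nn_integral_cong) (simp add: children)
  finally show ?thesis
    by (subst has_sum_iff_nn_integral_count_space)
       (auto simp: xicyl_eq intro!: infsum_nonneg weighted_mcyl_nonneg)
qed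

definition cyl_regret :: "'a list \<Rightarrow> real" where
  "cyl_regret x = regret_bound (w \<nu>) (mcyl \<nu> x) (xicyl Ms w x)"

definition next_kl :: "'a list \<Rightarrow> real" where
  "next_kl x = (\<Sum>\<^sub>\<infinity>a\<in>UNIV. cond (mcyl \<nu>) [a] x * ln (cond (mcyl \<nu>) [a] x / cond (xicyl Ms w) [a] x))"

lemma dKL_eq_next_kl: "dKL Ms w \<nu> s \<omega> = next_kl (stake (s - 1) \<omega>)"
  by (simp add: dKL_def next_kl_def)

lemma cyl_regret_nonneg: "0 \<le> cyl_regret x"
  unfolding cyl_regret_def using weight_pos[OF nu_in_Ms] weighted_mcyl_le_xicyl
  by (intro regret_bound_nonneg) (auto simp: mcyl_def)

lemma cyl_regret_chain_rule:
  "0 \<le> next_kl p \<and> ((\<lambda>a. cyl_regret (p @ [a])) has_sum (cyl_regret p - mcyl \<nu> p * next_kl p)) UNIV"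
proof (cases "mcyl \<nu> p = 0")
  case True
  \<comment> \<open>all conditionals are divisions by zero, hence \<open>0\<close>\<close>
  then have "mcyl \<nu> (p @ [a]) = 0" for a
    using mcyl_snoc_le[OF finite_measure_Ms sets_Ms, OF nu_in_Ms nu_in_Ms, of p a]
    by (simp add: mcyl_def antisym)
  with True show ?thesis by (simp add: next_kl_def cyl_regret_def cond_def regret_bound_def)
next
  case False
  then have "0 < mcyl \<nu> p" by (simp add: mcyl_def order_neq_le_trans)
  from regret_bound_chain_rule[OF weight_pos[OF nu_in_Ms] this weighted_mcyl_le_xicyl _
      weighted_mcyl_le_xicyl mcyl_has_sum_snoc[OF finite_measure_Ms sets_Ms] xicyl_has_sum_snoc]
  show ?thesis
    using nu_in_Ms by (simp add: next_kl_def cyl_regret_def cond_def mcyl_def)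
qed

lemma cyl_in_sets_nu [measurable]: "cyl x \<in> sets \<nu>"
  using cyl_in_sets sets_Ms[OF nu_in_Ms] by simp

lemma borel_measurable_dKL [measurable]: "(\<lambda>\<omega>. ennreal (dKL Ms w \<nu> s \<omega>)) \<in> borel_measurable \<nu>"
proof -
  have "(\<lambda>\<omega>. ennreal (next_kl (stake (s - 1) \<omega>))) \<in> borel_measurable seqS"
    by (rule measurable_compose[OF measurable_stake]) simp
  then show ?thesis
    by (simp add: dKL_eq_next_kl measurable_cong_sets[OF sets_Ms[OF nu_in_Ms] refl])
qed

definition cyl_dKL :: "'a list \<Rightarrow> nat \<Rightarrow> ennreal" where
  "cyl_dKL p s = (\<integral>\<^sup>+ \<omega>. indicator (cyl p) \<omega> * ennreal (dKL Ms w \<nu> s \<omega>) \<partial>\<nu>)"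

lemma cyl_dKL_first: "cyl_dKL p (Suc (length p)) = ennreal (next_kl p) * ennreal (mcyl \<nu> p)"
proof -
  interpret prob_space \<nu> using prob_space_Ms[OF nu_in_Ms] .
  have "cyl_dKL p (Suc (length p)) = (\<integral>\<^sup>+ \<omega>. ennreal (next_kl p) * indicator (cyl p) \<omega> \<partial>\<nu>)"
    unfolding cyl_dKL_def
    by (rule nn_integral_cong) (auto simp: dKL_eq_next_kl cyl_def split: split_indicator)
  also have "\<dots> = ennreal (next_kl p) * emeasure \<nu> (cyl p)"
    by (rule nn_integral_cmult_indicator) simp
  finally show ?thesis by (simp add: emeasure_eq_measure mcyl_def)
qed

lemma cyl_dKL_split: "cyl_dKL p s = (\<integral>\<^sup>+ a. cyl_dKL (p @ [a]) s \<partial>count_space UNIV)"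
proof -
  have "indicator (cyl p) \<omega> = (\<integral>\<^sup>+ a. indicator (cyl (p @ [a])) \<omega> \<partial>count_space UNIV)" for \<omega> :: "'a stream"
  proof (cases "\<omega> \<in> cyl p")
    case True
    then have "(\<integral>\<^sup>+ a. indicator (cyl (p @ [a])) \<omega> \<partial>count_space UNIV)
        = (\<Sum>a\<in>{\<omega> !! length p}. indicator (cyl (p @ [a])) \<omega>)"
      by (intro nn_integral_count_space') (auto simp: mem_cyl_snoc split: split_indicator)
    with True show ?thesis by (simp add: mem_cyl_snoc)
  qed (simp add: mem_cyl_snoc)
  then have "cyl_dKL p s
      = (\<integral>\<^sup>+ \<omega>. (\<integral>\<^sup>+ a. indicator (cyl (p @ [a])) \<omega> * ennreal (dKL Ms w \<nu> s \<omega>) \<partial>count_space UNIV) \<partial>\<nu>)"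
    unfolding cyl_dKL_def by (simp add: nn_integral_multc)
  also have "\<dots> = (\<integral>\<^sup>+ a. cyl_dKL (p @ [a]) s \<partial>count_space UNIV)"
    unfolding cyl_dKL_def by (rule nn_integral_count_space_nn_integral) auto
  finally show ?thesis .
qed

lemma sum_cyl_dKL_le: "(\<Sum>s\<in>{length p<..length p + k}. cyl_dKL p s) \<le> ennreal (cyl_regret p)"
proof (induction k arbitrary: p)
  case 0
  then show ?case by simp
next
  case (Suc k)
  let ?l = "length p"
  have "(\<Sum>s\<in>{?l<..?l + Suc k}. cyl_dKL p s)
      = cyl_dKL p (Suc ?l) + (\<Sum>s\<in>{Suc ?l<..Suc ?l + k}. cyl_dKL p s)"
  proof -
    have "{?l<..?l + Suc k} = insert (Suc ?l) {Suc ?l<..Suc ?l + k}" by auto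
    then show ?thesis by simp
  qed
  also have "(\<Sum>s\<in>{Suc ?l<..Suc ?l + k}. cyl_dKL p s)
      = (\<integral>\<^sup>+ a. (\<Sum>s\<in>{length (p @ [a])<..length (p @ [a]) + k}. cyl_dKL (p @ [a]) s) \<partial>count_space UNIV)"
    by (subst cyl_dKL_split) (simp add: nn_integral_sum)
  also have "\<dots> \<le> (\<integral>\<^sup>+ a. ennreal (cyl_regret (p @ [a])) \<partial>count_space UNIV)"
    by (intro nn_integral_mono Suc.IH)
  also have "cyl_dKL p (Suc ?l) + \<dots> = ennreal (cyl_regret p)"
  proof -
    from cyl_regret_chain_rule[of p] have kl: "0 \<le> next_kl p"
      and children: "((\<lambda>a. cyl_regret (p @ [a])) has_sum (cyl_regret p - mcyl \<nu> p * next_kl p)) UNIV"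
      by auto
    have rest: "0 \<le> cyl_regret p - mcyl \<nu> p * next_kl p"
      using children cyl_regret_nonneg by (rule has_sum_nonneg)
    have "(\<integral>\<^sup>+ a. ennreal (cyl_regret (p @ [a])) \<partial>count_space UNIV)
        = ennreal (cyl_regret p - mcyl \<nu> p * next_kl p)"
      using children rest cyl_regret_nonneg
      by (subst (asm) has_sum_iff_nn_integral_count_space) auto
    then show ?thesis
      using kl rest by (simp add: cyl_dKL_first mcyl_def ennreal_mult'[symmetric] ennreal_plus[symmetric]
          del: ennreal_plus)
  qed
  finally show ?case by (simp add: add_left_mono)
qed

lemma nn_integral_cyl_tail_le:
  "(\<integral>\<^sup>+ \<omega>. indicator (cyl p) \<omega> * (\<Sum>s. if length p < s then ennreal (dKL Ms w \<nu> s \<omega>) else 0) \<partial>\<nu>)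
     \<le> ennreal (cyl_regret p)"
proof -
  have "(\<integral>\<^sup>+ \<omega>. indicator (cyl p) \<omega> * (\<Sum>s. if length p < s then ennreal (dKL Ms w \<nu> s \<omega>) else 0) \<partial>\<nu>)
      = (\<integral>\<^sup>+ \<omega>. (\<Sum>s. indicator (cyl p) \<omega> * (if length p < s then ennreal (dKL Ms w \<nu> s \<omega>) else 0)) \<partial>\<nu>)"
    by (simp add: ennreal_suminf_cmult)
  also have "\<dots> = (\<Sum>s. \<integral>\<^sup>+ \<omega>. indicator (cyl p) \<omega> * (if length p < s then ennreal (dKL Ms w \<nu> s \<omega>) else 0) \<partial>\<nu>)"
    by (rule nn_integral_suminf) measurable
  also have "\<dots> = (\<Sum>s. if length p < s then cyl_dKL p s else 0)"
    by (rule suminf_cong) (simp add: cyl_dKL_def)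
  also have "\<dots> \<le> ennreal (cyl_regret p)"
  proof (rule suminf_le_const)
    fix N
    have "(\<Sum>s<N. if length p < s then cyl_dKL p s else 0) = (\<Sum>s\<in>{..<N} \<inter> {length p<..}. cyl_dKL p s)"
      by (simp add: sum.inter_restrict)
    also have "\<dots> \<le> (\<Sum>s\<in>{length p<..length p + N}. cyl_dKL p s)"
      by (rule sum_mono2) auto
    also have "\<dots> \<le> ennreal (cyl_regret p)" by (rule sum_cyl_dKL_le)
    finally show "(\<Sum>s<N. if length p < s then cyl_dKL p s else 0) \<le> ennreal (cyl_regret p)" .
  qed simp
  finally show ?thesis .
qed

end

lemma Flt_stake_invariant:
  assumes "S \<in> Flt n" "stake (n - 1) \<omega> = stake (n - 1) \<omega>'"
  shows "\<omega> \<in> S \<longleftrightarrow> \<omega>' \<in> S"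
  using assms unfolding Flt_def
proof (induction S rule: sigma_sets.induct)
  case (Basic a)
  then show ?case by (auto simp: cyl_def)
qed auto

lemma stopping_time_stake_in_Aset:
  assumes t: "stopping_time t" and t_\<omega>: "t \<omega> = enat N"
  shows "1 \<le> N" and "stake (N - 1) \<omega> \<in> Aset t"
proof -
  have "1 \<le> t \<omega>" using t by (simp add: stopping_time_def)
  then show N: "1 \<le> N" using t_\<omega> by (simp add: one_enat_def)
  then have event: "t -` {enat N} \<in> Flt N" using t by (simp add: stopping_time_def)
  have "t (stake (N - 1) \<omega> @- \<omega>') = enat N" for \<omega>'
    using Flt_stake_invariant[OF event, of \<omega> "stake (N - 1) \<omega> @- \<omega>'"] t_\<omega>
    by (simp add: stake_shift)
  then show "stake (N - 1) \<omega> \<in> Aset t"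
    using N by (simp add: Aset_def)
qed

lemma stopped_sum_le_cylinder_tails:
  fixes f :: "nat \<Rightarrow> 'a::countable stream \<Rightarrow> ennreal"
  assumes t: "stopping_time t"
  shows "(\<Sum>s. if t \<omega> \<le> enat s \<and> enat s < t' \<omega> then f s \<omega> else 0)
    \<le> (\<integral>\<^sup>+ p. indicator (cyl p) \<omega> * (\<Sum>s. if length p < s then f s \<omega> else 0) \<partial>count_space (Aset t))"
proof (cases "t \<omega>")
  case (enat N)
  let ?p = "stake (N - 1) \<omega>"
  let ?tail = "\<lambda>p. \<Sum>s. if length p < s then f s \<omega> else 0"
  note N = stopping_time_stake_in_Aset[OF t enat]
  have "(\<Sum>s. if t \<omega> \<le> enat s \<and> enat s < t' \<omega> then f s \<omega> else 0) \<le> ?tail ?p"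
    using enat N(1) by (intro suminf_le) auto
  also have "\<dots> = (\<Sum>\<^sub>\<infinity>p\<in>{?p}. indicator (cyl p) \<omega> * ?tail p)"
    by (simp add: cyl_def)
  also have "\<dots> \<le> (\<Sum>\<^sub>\<infinity>p\<in>Aset t. indicator (cyl p) \<omega> * ?tail p)"
    using N(2) by (intro infsum_mono_neutral) (auto simp: nonneg_summable_on_complete)
  finally show ?thesis
    by (simp add: infsum_eq_nn_integral_count_space[OF countable_subset[OF subset_UNIV]])
qed simp

theorem lemma5:
  fixes Ms :: "'a::countable stream measure set"
    and w :: "'a stream measure \<Rightarrow> real"
    and \<nu> :: "'a stream measure"
    and t t' :: "'a stream \<Rightarrow> enat"
  assumes "countable Ms"
    and "\<forall>\<rho>\<in>Ms. prob_space \<rho> \<and> sets \<rho> = sets seqS"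
    and "\<forall>\<rho>\<in>Ms. 0 < w \<rho> \<and> w \<rho> \<le> 1"
    and "(w has_sum 1) Ms"
    and "\<nu> \<in> Ms"
    and "stopping_time t" and "stopping_time t'"
    and "\<forall>\<omega>. t \<omega> \<le> t' \<omega>"
  shows "(\<integral>\<^sup>+ \<omega>. (\<Sum>s. if t \<omega> \<le> enat s \<and> enat s < t' \<omega>
                        then ennreal (dKL Ms w \<nu> s \<omega>) else 0) \<partial>\<nu>)
         \<le> (\<Sum>\<^sub>\<infinity>x\<in>Aset t. ennreal (if mcyl \<nu> x = 0 then 0 else
               mcyl \<nu> x * (ln (1 / w \<nu>) + ln (xicyl Ms w x / mcyl \<nu> x))))"
proof -
  interpret bayes_mixture Ms w \<nu>
    by (rule bayes_mixture.intro) (use assms(1-5) in \<open>simp_all add: Ball_def\<close>)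
  define tail where "tail p \<omega> = (\<Sum>s. if length p < s then ennreal (dKL Ms w \<nu> s \<omega>) else 0)"
    for p :: "'a list" and \<omega>
  have countable_A: "countable (Aset t)" by (rule countable_subset[OF subset_UNIV]) simp
  have "(\<integral>\<^sup>+ \<omega>. (\<Sum>s. if t \<omega> \<le> enat s \<and> enat s < t' \<omega> then ennreal (dKL Ms w \<nu> s \<omega>) else 0) \<partial>\<nu>)
      \<le> (\<integral>\<^sup>+ \<omega>. (\<integral>\<^sup>+ p. indicator (cyl p) \<omega> * tail p \<omega> \<partial>count_space (Aset t)) \<partial>\<nu>)"
    unfolding tail_def by (rule nn_integral_mono) (rule stopped_sum_le_cylinder_tails[OF assms(6)])
  also have "\<dots> = (\<integral>\<^sup>+ p. (\<integral>\<^sup>+ \<omega>. indicator (cyl p) \<omega> * tail p \<omega> \<partial>\<nu>) \<partial>count_space (Aset t))"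
    unfolding tail_def by (rule nn_integral_count_space_nn_integral[OF countable_A]) measurable
  also have "\<dots> \<le> (\<integral>\<^sup>+ p. ennreal (cyl_regret p) \<partial>count_space (Aset t))"
    unfolding tail_def by (intro nn_integral_mono nn_integral_cyl_tail_le)
  finally show ?thesis
    by (simp add: infsum_eq_nn_integral_count_space[OF countable_A] cyl_regret_def regret_bound_def)
qed

end
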